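(* Let $G=(V,E)$ be a finite simple oriented complete graph on $N$ vertices. Then $G$ can be transformed into a directed acyclic graph by a sequence of at most $\frac{|E|}{2}=\frac{N^2-N}{4}$ Single Edge Flips such that the number of directed 3-cycles strictly decreases with each application of a Single Edge Flip.
   Context: A simple oriented graph is a pair $G=(V,E)$ with $E\subseteq\{(i,j)\in V\times V: i\neq j\}$ such that $(i,j)\in E$ implies $(j,i)\notin E$. It is complete if for all distinct $i,j\in V$ exactly one of $(i,j),(j,i)$ lies in $E$ (a tournament). For $(i,j)\in E$, the Single Edge Flip $\mathrm{SEF}_{i,j}$ maps $G$ to $(V,(E\setminus\{(i,j)\})\cup\{(j,i)\})$. A directed 3-cycle is a set of three vertices $\{a,b,c\}$ with $(a,b),(b,c),(c,a)\in E$. *)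

theory Defs
  imports Main
begin

definition simple_oriented :: "'a set \<Rightarrow> ('a \<times> 'a) set \<Rightarrow> bool" where
  "simple_oriented V E \<longleftrightarrow> E \<subseteq> V \<times> V \<and> (\<forall>(i,j)\<in>E. i \<noteq> j) \<and> (\<forall>(i,j)\<in>E. (j,i) \<notin> E)"

definition complete_oriented :: "'a set \<Rightarrow> ('a \<times> 'a) set \<Rightarrow> bool" where
  "complete_oriented V E \<longleftrightarrow> simple_oriented V E \<and>
     (\<forall>i\<in>V. \<forall>j\<in>V. i \<noteq> j \<longrightarrow> ((i,j) \<in> E \<longleftrightarrow> (j,i) \<notin> E))"

definition SEF :: "'a \<Rightarrow> 'a \<Rightarrow> ('a \<times> 'a) set \<Rightarrow> ('a \<times> 'a) set" where
  "SEF i j E = (E - {(i,j)}) \<union> {(j,i)}"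

definition three_cycles :: "('a \<times> 'a) set \<Rightarrow> 'a set set" where
  "three_cycles E = {{a,b,c} | a b c. (a,b) \<in> E \<and> (b,c) \<in> E \<and> (c,a) \<in> E}"

end

theory Submission
  imports Defs
begin

(* Rank the vertices by an injective r :: 'a => int with the fewest backward edges (x, y),
   r y < r x; these form a minimum feedback arc set, and comparing r with its reverse shows
   there are at most |E|/2 of them.  Flip a backward edge (u, v) of maximal length r u - r v.
   Maximality forces every w with u -> w -> v to lie strictly between v and u.  Moving u just
   below v, or v just above u, cannot reduce the number of backward edges, so u beats fewer
   than half and v more than half of the vertices between them.  Hence fewer of these close
   a 3-cycle u -> w -> v, which the flip creates, than a 3-cycle v -> w -> u, which it
   destroys.  The flip removes one backward edge and keeps r optimal, so after as many flips
   as there were backward edges the graph is ordered by r and hence acyclic. *)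

lemma complete_oriented_iff:
  "complete_oriented V E \<longleftrightarrow> E \<subseteq> V \<times> V \<and> asym E \<and> total_on V E"
  unfolding complete_oriented_def simple_oriented_def asym_on_def total_on_def by blast

lemma asym_SEF: "asym E \<Longrightarrow> (u, v) \<in> E \<Longrightarrow> asym (SEF u v E)"
  unfolding SEF_def asym_iff by blast

lemma complete_oriented_SEF:
  assumes "complete_oriented V E" "(u, v) \<in> E"
  shows "complete_oriented V (SEF u v E)"
  using assms asym_SEF[of E u v] unfolding complete_oriented_iff
  by (auto simp: SEF_def total_on_def)

lemma finite_three_cycles: "finite E \<Longrightarrow> finite (three_cycles E)"
  by (rule finite_subset[of _ "Pow (fst ` E)"]) (force simp: three_cycles_def)+

lemma three_cycles_through_edge:
  assumes "asym E" "(u, v) \<in> E"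
  shows "{S \<in> three_cycles E. u \<in> S \<and> v \<in> S} = (\<lambda>w. {u, v, w}) ` {w. (v, w) \<in> E \<and> (w, u) \<in> E}"
proof (intro equalityI subsetI)
  fix S assume "S \<in> {S \<in> three_cycles E. u \<in> S \<and> v \<in> S}"
  then obtain a b c where S: "S = {a, b, c}" "(a, b) \<in> E" "(b, c) \<in> E" "(c, a) \<in> E"
    and uvS: "{u, v} \<subseteq> S"
    unfolding three_cycles_def by blast
  have "(v, u) \<notin> E" "u \<noteq> v" using assms by (auto dest: asymD)
  then consider "u = a" "v = b" | "u = b" "v = c" | "u = c" "v = a"
    using S uvS by auto
  then show "S \<in> (\<lambda>w. {u, v, w}) ` {w. (v, w) \<in> E \<and> (w, u) \<in> E}"
    by cases (use S in auto)
qed (use assms in \<open>auto simp: three_cycles_def\<close>)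

lemma card_three_cycles_through_edge:
  assumes "asym E" "(u, v) \<in> E"
  shows "card {S \<in> three_cycles E. u \<in> S \<and> v \<in> S} = card {w. (v, w) \<in> E \<and> (w, u) \<in> E}"
proof -
  have "inj_on (\<lambda>w. {u, v, w}) {w. (v, w) \<in> E \<and> (w, u) \<in> E}"
    using assms by (auto intro!: inj_onI dest: asymD)
  then show ?thesis
    by (simp add: three_cycles_through_edge[OF assms] card_image)
qed

lemma card_three_cycles_SEF:
  assumes "finite E" "asym E" "(u, v) \<in> E"
  shows "card (three_cycles (SEF u v E)) + card {w. (v, w) \<in> E \<and> (w, u) \<in> E}
       = card (three_cycles E) + card {w. (u, w) \<in> E \<and> (w, v) \<in> E}"
proof -
  let ?E' = "SEF u v E"
  have split: "card A = card {S \<in> A. P S} + card {S \<in> A. \<not> P S}" if "finite A" for A P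
    using card_Int_Diff[OF that, of "Collect P"] by (simp add: Int_def set_diff_eq)
  have E': "asym ?E'" "(v, u) \<in> ?E'"
    using assms asym_SEF by (auto simp: SEF_def)
  have paths: "{w. (u, w) \<in> ?E' \<and> (w, v) \<in> ?E'} = {w. (u, w) \<in> E \<and> (w, v) \<in> E}"
    using assms by (auto simp: SEF_def dest: asymD)
  have "card (three_cycles ?E') =
      card {S \<in> three_cycles ?E'. v \<in> S \<and> u \<in> S} + card {S \<in> three_cycles ?E'. \<not> (v \<in> S \<and> u \<in> S)}"
    using assms(1) by (intro split finite_three_cycles) (simp add: SEF_def)
  also have "card {S \<in> three_cycles ?E'. v \<in> S \<and> u \<in> S} = card {w. (u, w) \<in> E \<and> (w, v) \<in> E}"
    using card_three_cycles_through_edge[OF E'] paths by simp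
  also have "{S \<in> three_cycles ?E'. \<not> (v \<in> S \<and> u \<in> S)} = {S \<in> three_cycles E. \<not> (u \<in> S \<and> v \<in> S)}"
    unfolding three_cycles_def SEF_def by blast
  finally have "card (three_cycles ?E') =
      card {w. (u, w) \<in> E \<and> (w, v) \<in> E} + card {S \<in> three_cycles E. \<not> (u \<in> S \<and> v \<in> S)}" .
  moreover have "card (three_cycles E) =
      card {w. (v, w) \<in> E \<and> (w, u) \<in> E} + card {S \<in> three_cycles E. \<not> (u \<in> S \<and> v \<in> S)}"
    using split[OF finite_three_cycles[OF assms(1)], of "\<lambda>S. u \<in> S \<and> v \<in> S"]
      card_three_cycles_through_edge[OF assms(2,3)] by simp
  ultimately show ?thesis by simp
qed

definition backward_edges :: "('a \<Rightarrow> int) \<Rightarrow> ('a \<times> 'a) set \<Rightarrow> ('a \<times> 'a) set" where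
  "backward_edges r E = {(x, y) \<in> E. r y < r x}"

definition optimal_ranking :: "'a set \<Rightarrow> ('a \<times> 'a) set \<Rightarrow> ('a \<Rightarrow> int) \<Rightarrow> bool" where
  "optimal_ranking V E r \<longleftrightarrow> inj_on r V \<and>
     (\<forall>r'. inj_on r' V \<longrightarrow> card (backward_edges r E) \<le> card (backward_edges r' E))"

lemma mem_backward_edges [simp]: "(x, y) \<in> backward_edges r E \<longleftrightarrow> (x, y) \<in> E \<and> r y < r x"
  by (simp add: backward_edges_def)

lemma finite_backward_edges [simp]: "finite E \<Longrightarrow> finite (backward_edges r E)"
  by (rule finite_subset[of _ E]) (auto simp: backward_edges_def)

lemma optimal_ranking_exists:
  assumes "finite V"
  shows "\<exists>r. optimal_ranking V E r"
proof -
  obtain f :: "'a \<Rightarrow> nat" where "inj_on f V"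
    using finite_imp_inj_to_nat_seg[OF assms] by blast
  then have "inj_on (\<lambda>x. int (f x)) V"
    by (simp add: inj_on_def)
  then show ?thesis
    unfolding optimal_ranking_def
    by (rule ex_has_least_nat[where m = "\<lambda>r. card (backward_edges r E)"])
qed

lemma card_backward_edges_le_half:
  assumes "optimal_ranking V E r" "finite E" "E \<subseteq> V \<times> V" "asym E"
  shows "2 * card (backward_edges r E) \<le> card E"
proof -
  let ?r' = "\<lambda>x. - r x"
  have inj: "inj_on r V" "inj_on ?r' V"
    using assms(1) by (auto simp: optimal_ranking_def inj_on_def)
  have "r x \<noteq> r y" if "(x, y) \<in> E" for x y
    using that assms(3,4) inj(1) by (auto dest: asymD inj_onD)
  then have "E = backward_edges r E \<union> backward_edges ?r' E"
    by (fastforce simp: backward_edges_def)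
  moreover have "backward_edges r E \<inter> backward_edges ?r' E = {}"
    by (auto simp: backward_edges_def)
  ultimately have "card E = card (backward_edges r E) + card (backward_edges ?r' E)"
    using assms(2) by (metis card_Un_disjoint finite_backward_edges)
  moreover have "card (backward_edges r E) \<le> card (backward_edges ?r' E)"
    using assms(1) inj(2) by (simp add: optimal_ranking_def)
  ultimately show ?thesis by linarith
qed

lemma acyclic_if_ranking_increasing:
  fixes r :: "'a \<Rightarrow> 'b :: order"
  assumes "\<And>x y. (x, y) \<in> E \<Longrightarrow> r x < r y"
  shows "acyclic E"
proof -
  have "r x < r y" if "(x, y) \<in> E\<^sup>+" for x y
    using that by induction (auto dest: assms order.strict_trans)
  then show ?thesis
    unfolding acyclic_def by blast
qed

lemma backward_edges_SEF:
  assumes "(u, v) \<in> backward_edges r E"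
  shows "backward_edges r (SEF u v E) = backward_edges r E - {(u, v)}"
  using assms by (auto simp: backward_edges_def SEF_def)

lemma finite_SEF: "finite E \<Longrightarrow> finite (SEF u v E)"
  by (simp add: SEF_def)

lemma optimal_ranking_SEF:
  assumes opt: "optimal_ranking V E r" and "finite E" and uv: "(u, v) \<in> backward_edges r E"
  shows "optimal_ranking V (SEF u v E) r"
  unfolding optimal_ranking_def
proof (intro conjI allI impI)
  show "inj_on r V" using opt by (simp add: optimal_ranking_def)
  fix r' :: "'a \<Rightarrow> int" assume "inj_on r' V"
  then have "card (backward_edges r E) \<le> card (backward_edges r' E)"
    using opt by (simp add: optimal_ranking_def)
  also have "\<dots> \<le> card (insert (u, v) (backward_edges r' (SEF u v E)))"
    using \<open>finite E\<close> by (intro card_mono) (auto simp: finite_SEF SEF_def)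
  also have "\<dots> \<le> Suc (card (backward_edges r' (SEF u v E)))"
    using \<open>finite E\<close> by (simp add: card_insert_if finite_SEF)
  finally show "card (backward_edges r (SEF u v E)) \<le> card (backward_edges r' (SEF u v E))"
    using uv \<open>finite E\<close> by (simp add: backward_edges_SEF card_Diff_singleton)
qed

lemma optimal_ranking_converse:
  assumes "optimal_ranking V E r"
  shows "optimal_ranking V (E\<inverse>) (\<lambda>x. - r x)"
proof -
  have flip: "backward_edges s (E\<inverse>) = (backward_edges (\<lambda>x. - s x) E)\<inverse>" for s :: "'a \<Rightarrow> int"
    by (auto simp: backward_edges_def)
  have "inj_on (\<lambda>x. - s x) V \<longleftrightarrow> inj_on s V" for s :: "'a \<Rightarrow> int"
    by (simp add: inj_on_def)
  then show ?thesis
    using assms by (simp add: optimal_ranking_def flip)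
qed

lemma optimal_ranking_reversal:
  fixes r' :: "'a \<Rightarrow> int"
  assumes opt: "optimal_ranking V E r" and "inj_on r' V" "finite E"
    and keep: "\<And>x y. (x, y) \<in> E - P \<Longrightarrow> r' y < r' x \<longleftrightarrow> r y < r x"
    and swap: "\<And>x y. (x, y) \<in> E \<inter> P \<Longrightarrow> r' y < r' x \<longleftrightarrow> \<not> r y < r x"
  shows "card (backward_edges r E \<inter> P) \<le> card (E \<inter> P - backward_edges r E)"
proof -
  have "backward_edges r' E = (backward_edges r E - P) \<union> (E \<inter> P - backward_edges r E)"
    using keep swap by (auto simp: backward_edges_def)
  then have "card (backward_edges r' E) = card (backward_edges r E - P) + card (E \<inter> P - backward_edges r E)"
    using \<open>finite E\<close> by (auto intro: card_Un_disjoint)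
  moreover have "card (backward_edges r E) = card (backward_edges r E \<inter> P) + card (backward_edges r E - P)"
    using \<open>finite E\<close> by (simp add: card_Int_Diff)
  moreover have "card (backward_edges r E) \<le> card (backward_edges r' E)"
    using opt \<open>inj_on r' V\<close> by (simp add: optimal_ranking_def)
  ultimately show ?thesis by linarith
qed

lemma optimal_ranking_move_down:
  assumes opt: "optimal_ranking V E r" and "finite E" "E \<subseteq> V \<times> V"
  shows "card {z. c < r z \<and> r z < r u \<and> (u, z) \<in> E} \<le> card {z. c < r z \<and> r z < r u \<and> (z, u) \<in> E}"
proof (cases "c < r u")
  case True
  define Z where "Z = {z. c < r z \<and> r z < r u}"
  define P where "P = Pair u ` Z \<union> (\<lambda>z. (z, u)) ` Z"
  \<comment> \<open>Reinsert u just above rank c: only the order between u and Z changes.\<close>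
  define r' where "r' x = (if x = u then 2 * c + 1 else 2 * r x)" for x
  have "inj_on r V"
    using opt by (simp add: optimal_ranking_def)
  then have ranks: "r x \<noteq> r y" if "(x, y) \<in> E" "x \<noteq> y" for x y
    using that \<open>E \<subseteq> V \<times> V\<close> by (auto dest: inj_onD)
  have "inj_on r' V"
    using \<open>inj_on r V\<close> unfolding r'_def inj_on_def by (auto split: if_splits; presburger)
  then have "card (backward_edges r E \<inter> P) \<le> card (E \<inter> P - backward_edges r E)"
    by (rule optimal_ranking_reversal[OF opt _ \<open>finite E\<close>])
      (use True ranks in \<open>auto simp: P_def Z_def r'_def, fastforce+\<close>)
  moreover have "backward_edges r E \<inter> P = Pair u ` {z \<in> Z. (u, z) \<in> E}"
    by (auto simp: P_def Z_def backward_edges_def)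
  moreover have "E \<inter> P - backward_edges r E = (\<lambda>z. (z, u)) ` {z \<in> Z. (z, u) \<in> E}"
    by (auto simp: P_def Z_def backward_edges_def)
  ultimately show ?thesis
    by (simp add: card_image inj_on_def Z_def conj_assoc)
next
  case False
  then have "{z. c < r z \<and> r z < r u \<and> (u, z) \<in> E} = {}"
    by auto
  then show ?thesis
    by (metis card.empty le0)
qed

lemma optimal_ranking_move_up:
  assumes "optimal_ranking V E r" "finite E" "E \<subseteq> V \<times> V"
  shows "card {z. r u < r z \<and> r z < c \<and> (z, u) \<in> E} \<le> card {z. r u < r z \<and> r z < c \<and> (u, z) \<in> E}"
proof -
  have "E\<inverse> \<subseteq> V \<times> V"
    using assms(3) by auto
  then show ?thesis
    using optimal_ranking_move_down[OF optimal_ranking_converse[OF assms(1)], of "- c" u] assms(2)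
    by (simp add: conj_ac)
qed

lemma card_Diff_less_card_Diff:
  assumes "finite A" "finite B" "card A < card B"
  shows "card (A - B) < card (B - A)"
  using assms card_Int_Diff[of A B] card_Int_Diff[of B A] by (simp add: Int_commute)

lemma longest_backward_edge_spans_paths:
  assumes "inj_on r V" "E \<subseteq> V \<times> V" "asym E"
    and uv: "(u, v) \<in> backward_edges r E"
    and longest: "\<And>x y. (x, y) \<in> backward_edges r E \<Longrightarrow> r x - r y \<le> r u - r v"
    and uw: "(u, w) \<in> E" and wv: "(w, v) \<in> E"
  shows "r v < r w \<and> r w < r u"
proof -
  have "r w \<noteq> r u" "r w \<noteq> r v"
    using assms(1-3) uw wv by (auto dest: asymD inj_onD)
  moreover have "\<not> r w < r v"
    using longest[of u w] uv uw by auto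
  moreover have "\<not> r u < r w"
    using longest[of w v] uv wv by auto
  ultimately show ?thesis by auto
qed

lemma optimal_ranking_backward_edge_between:
  assumes "finite V" and co: "complete_oriented V E" and opt: "optimal_ranking V E r"
    and uv: "(u, v) \<in> backward_edges r E"
  defines "W \<equiv> {w \<in> V. r v < r w \<and> r w < r u}"
  shows "2 * card {w \<in> W. (u, w) \<in> E} < card W" and "card W < 2 * card {w \<in> W. (v, w) \<in> E}"
proof -
  define X where "X = {w \<in> W. (v, w) \<in> E}"
  define Y where "Y = {w \<in> W. (u, w) \<in> E}"
  have EV: "E \<subseteq> V \<times> V" and "asym E" and inj: "inj_on r V"
    using co opt by (auto simp: complete_oriented_iff optimal_ranking_def)
  have "u \<in> V" "v \<in> V" "(v, u) \<notin> E"
    using uv EV \<open>asym E\<close> by (auto dest: asymD)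
  have rank_neq: "r x \<noteq> r y" if "x \<in> V" "y \<in> V" "x \<noteq> y" for x y
    using inj that by (auto dest: inj_onD)
  have at_v: "r v - 1 < r z \<longleftrightarrow> r v < r z \<or> z = v" and at_u: "r z < r u + 1 \<longleftrightarrow> r z < r u \<or> z = u"
    if "z \<in> V" for z
    using rank_neq[OF that \<open>v \<in> V\<close>] rank_neq[OF that \<open>u \<in> V\<close>] by fastforce+
  have tot: "(y, x) \<in> E" if "x \<in> V" "y \<in> V" "x \<noteq> y" "(x, y) \<notin> E" for x y
    using co that unfolding complete_oriented_def by blast
  have "finite E"
    using \<open>finite V\<close> EV by (meson finite_SigmaI finite_subset)
  have "finite W" "X \<subseteq> W" "Y \<subseteq> W" "u \<notin> W" "v \<notin> Y"
    using \<open>finite V\<close> by (auto simp: W_def X_def Y_def)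
  then have fin: "finite X" "finite Y"
    by (auto intro: finite_subset)
  have "card {z. r v - 1 < r z \<and> r z < r u \<and> (u, z) \<in> E}
      \<le> card {z. r v - 1 < r z \<and> r z < r u \<and> (z, u) \<in> E}"
    by (rule optimal_ranking_move_down[OF opt \<open>finite E\<close> EV])
  also have "{z. r v - 1 < r z \<and> r z < r u \<and> (u, z) \<in> E} = insert v Y"
    using uv EV by (auto simp: W_def Y_def at_v)
  also have "{z. r v - 1 < r z \<and> r z < r u \<and> (z, u) \<in> E} = W - Y"
    using EV \<open>v \<in> V\<close> \<open>u \<in> V\<close> \<open>(v, u) \<notin> E\<close> tot
    by (auto simp: W_def Y_def at_v dest: asymD[OF \<open>asym E\<close>])
  finally show "2 * card Y < card W"
    using fin \<open>v \<notin> Y\<close> \<open>Y \<subseteq> W\<close> \<open>finite W\<close> card_mono[OF \<open>finite W\<close> \<open>Y \<subseteq> W\<close>]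
    by (simp add: card_Diff_subset)
  have "card {z. r v < r z \<and> r z < r u + 1 \<and> (z, v) \<in> E}
      \<le> card {z. r v < r z \<and> r z < r u + 1 \<and> (v, z) \<in> E}"
    by (rule optimal_ranking_move_up[OF opt \<open>finite E\<close> EV])
  also have "{z. r v < r z \<and> r z < r u + 1 \<and> (v, z) \<in> E} = X"
    using EV \<open>(v, u) \<notin> E\<close> at_u by (auto simp: W_def X_def)
  also have "{z. r v < r z \<and> r z < r u + 1 \<and> (z, v) \<in> E} = insert u (W - X)"
    using uv EV \<open>u \<in> V\<close> \<open>v \<in> V\<close> tot at_u
    by (auto simp: W_def X_def dest: asymD[OF \<open>asym E\<close>])
  finally show "card W < 2 * card X"
    using fin \<open>finite W\<close> \<open>u \<notin> W\<close> \<open>X \<subseteq> W\<close> card_mono[OF \<open>finite W\<close> \<open>X \<subseteq> W\<close>]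
    by (simp add: card_Diff_subset)
qed

lemma card_paths_less_at_longest_backward_edge:
  assumes "finite V" and co: "complete_oriented V E" and opt: "optimal_ranking V E r"
    and uv: "(u, v) \<in> backward_edges r E"
    and longest: "\<And>x y. (x, y) \<in> backward_edges r E \<Longrightarrow> r x - r y \<le> r u - r v"
  shows "card {w. (u, w) \<in> E \<and> (w, v) \<in> E} < card {w. (v, w) \<in> E \<and> (w, u) \<in> E}"
proof -
  have EV: "E \<subseteq> V \<times> V" and "asym E" and inj: "inj_on r V"
    using co opt by (auto simp: complete_oriented_iff optimal_ranking_def)
  have "u \<in> V" "v \<in> V"
    using uv EV by auto
  have tot: "(y, x) \<in> E" if "x \<in> V" "y \<in> V" "x \<noteq> y" "(x, y) \<notin> E" for x y
    using co that unfolding complete_oriented_def by blast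
  define W where "W = {w \<in> V. r v < r w \<and> r w < r u}"
  define X where "X = {w \<in> W. (v, w) \<in> E}"
  define Y where "Y = {w \<in> W. (u, w) \<in> E}"
  have "finite Y" "finite X"
    using \<open>finite V\<close> by (auto simp: W_def X_def Y_def)
  moreover have "card Y < card X"
    using optimal_ranking_backward_edge_between[OF \<open>finite V\<close> co opt uv]
    unfolding W_def X_def Y_def by linarith
  ultimately have "card (Y - X) < card (X - Y)"
    by (rule card_Diff_less_card_Diff)
  also have "Y - X = {w. (u, w) \<in> E \<and> (w, v) \<in> E}"
    using longest_backward_edge_spans_paths[OF inj EV \<open>asym E\<close> uv longest] EV tot \<open>v \<in> V\<close>
    by (auto simp: W_def X_def Y_def dest: asymD[OF \<open>asym E\<close>])
  also have "card (X - Y) \<le> card {w. (v, w) \<in> E \<and> (w, u) \<in> E}"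
    using tot \<open>finite V\<close> EV \<open>u \<in> V\<close>
    by (intro card_mono) (auto simp: W_def X_def Y_def intro: finite_subset)
  finally show ?thesis .
qed

definition cycle_reducing_flip :: "('a \<times> 'a) set \<Rightarrow> ('a \<times> 'a) set \<Rightarrow> bool" where
  "cycle_reducing_flip E E' \<longleftrightarrow>
     (\<exists>(i, j)\<in>E. E' = SEF i j E \<and> card (three_cycles E') < card (three_cycles E))"

lemma longest_backward_edge_exists:
  assumes "finite E" "backward_edges r E \<noteq> {}"
  obtains u v where "(u, v) \<in> backward_edges r E"
    and "\<And>x y. (x, y) \<in> backward_edges r E \<Longrightarrow> r x - r y \<le> r u - r v"
proof -
  obtain p where "is_arg_min (\<lambda>(x, y). r y - r x) (\<lambda>p. p \<in> backward_edges r E) p"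
    using ex_is_arg_min_if_finite[OF finite_backward_edges[OF assms(1)] assms(2)] by blast
  then show ?thesis
    using that unfolding is_arg_min_linorder by (cases p) fastforce
qed

lemma acyclic_if_no_backward_edges:
  assumes "inj_on r V" "E \<subseteq> V \<times> V" "asym E" "backward_edges r E = {}"
  shows "acyclic E"
proof (rule acyclic_if_ranking_increasing)
  fix x y assume "(x, y) \<in> E"
  then have "r x \<noteq> r y" "\<not> r y < r x"
    using assms by (auto dest: asymD inj_onD simp: backward_edges_def)
  then show "r x < r y" by simp
qed

lemma optimal_ranking_flips_to_acyclic:
  assumes "finite V" "complete_oriented V E" "optimal_ranking V E r"
  shows "\<exists>E'. (cycle_reducing_flip ^^ card (backward_edges r E)) E E' \<and> acyclic E'"
  using assms
proof (induction "card (backward_edges r E)" arbitrary: E)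
  case 0
  then have "E \<subseteq> V \<times> V" "asym E" "inj_on r V" "finite E"
    by (auto simp: complete_oriented_iff optimal_ranking_def intro: finite_subset)
  with 0 have "acyclic E"
    by (intro acyclic_if_no_backward_edges) auto
  with 0 show ?case by auto
next
  case (Suc n)
  have "finite E" "asym E"
    using Suc.prems by (auto simp: complete_oriented_iff intro: finite_subset)
  then obtain u v where uv: "(u, v) \<in> backward_edges r E"
    and longest: "\<And>x y. (x, y) \<in> backward_edges r E \<Longrightarrow> r x - r y \<le> r u - r v"
    using longest_backward_edge_exists Suc.hyps(2) by (metis card.empty nat.simps(3))
  let ?E' = "SEF u v E"
  have "cycle_reducing_flip E ?E'"
    using uv card_three_cycles_SEF[OF \<open>finite E\<close> \<open>asym E\<close>, of u v]
      card_paths_less_at_longest_backward_edge[OF Suc.prems uv longest]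
    unfolding cycle_reducing_flip_def by auto
  moreover have "complete_oriented V ?E'" "optimal_ranking V ?E' r"
    using uv Suc.prems \<open>finite E\<close> by (auto intro: complete_oriented_SEF optimal_ranking_SEF)
  moreover have "n = card (backward_edges r ?E')"
    using uv Suc.hyps(2) \<open>finite E\<close> by (simp add: backward_edges_SEF)
  ultimately show ?case
    using Suc.hyps(1) Suc.prems(1) Suc.hyps(2) by (metis relpowp_Suc_I2)
qed

theorem theoremA3:
  fixes V :: "'a set" and E :: "('a \<times> 'a) set"
  assumes "finite V" and "complete_oriented V E"
  shows "\<exists>k::nat. \<exists>Gs :: nat \<Rightarrow> ('a \<times> 'a) set.
           Gs 0 = E \<and>
           2 * k \<le> card E \<and>
           (\<forall>t<k. \<exists>(i,j)\<in>Gs t. Gs (Suc t) = SEF i j (Gs t) \<and>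
                     card (three_cycles (Gs (Suc t))) < card (three_cycles (Gs t))) \<and>
           acyclic (Gs k)"
proof -
  obtain r where opt: "optimal_ranking V E r"
    using optimal_ranking_exists[OF assms(1)] by blast
  have "2 * card (backward_edges r E) \<le> card E"
    using assms by (intro card_backward_edges_le_half[OF opt])
      (auto simp: complete_oriented_iff intro: finite_subset)
  moreover obtain E' where "(cycle_reducing_flip ^^ card (backward_edges r E)) E E'" "acyclic E'"
    using optimal_ranking_flips_to_acyclic[OF assms opt] by blast
  then obtain Gs where "Gs 0 = E" "acyclic (Gs (card (backward_edges r E)))"
    "\<forall>t < card (backward_edges r E). cycle_reducing_flip (Gs t) (Gs (Suc t))"
    unfolding relpowp_fun_conv by auto
  ultimately show ?thesis
    unfolding cycle_reducing_flip_def by blast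
qed

end
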